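(* Let $\rho:\mathfrak g\to\mathfrak{gl}(V)$ be a representation of a Lie algebra $\mathfrak g$. Define $\Phi:\mathrm{Hom}(\wedge^kV,\mathfrak g)\to\mathrm{Hom}(\wedge^kV\otimes V,V)$, $k\ge0$, by $\Phi(f)(u_1,\dots,u_k,u_{k+1})=\rho(f(u_1,\dots,u_k))(u_{k+1})$. Then $\Phi$ is a homomorphism of graded Lie algebras from $(\mathcal C^*(V,\mathfrak g),[\![\cdot,\cdot]\!])$ to $(C^*(V,V),[\cdot,\cdot]^C)$, i.e. $\Phi([\![P,Q]\!])=[\Phi(P),\Phi(Q)]^C$ for all $P\in\mathrm{Hom}(\wedge^nV,\mathfrak g)$, $Q\in\mathrm{Hom}(\wedge^mV,\mathfrak g)$.
   Context: All vector spaces finite-dimensional over an algebraically closed field of characteristic $0$. $\mathbb S_{(i_1,\dots,i_k)}$ denotes unshuffles (permutations increasing on consecutive blocks of sizes $i_1,\dots,i_k$). $\mathcal C^*(V,\mathfrak g)=\bigoplus_k\mathrm{Hom}(\wedge^kV,\mathfrak g)$ with bracket $[\![P,Q]\!](u_1,\dots,u_{m+n})=\sum_{\sigma\in\mathbb S_{(m,1,n-1)}}(-1)^{\sigma}P(\rho(Q(u_{\sigma(1)},\dots,u_{\sigma(m)}))u_{\sigma(m+1)},u_{\sigma(m+2)},\dots,u_{\sigma(m+n)})-(-1)^{mn}\sum_{\sigma\in\mathbb S_{(n,1,m-1)}}(-1)^{\sigma}Q(\rho(P(u_{\sigma(1)},\dots,u_{\sigma(n)}))u_{\sigma(n+1)},u_{\sigma(n+2)},\dots,u_{\sigma(m+n)})+(-1)^{mn}\sum_{\sigma\in\mathbb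 S_{(n,m)}}(-1)^{\sigma}[P(u_{\sigma(1)},\dots,u_{\sigma(n)}),Q(u_{\sigma(n+1)},\dots,u_{\sigma(m+n)})]$ for $P\in\mathrm{Hom}(\wedge^nV,\mathfrak g)$, $Q\in\mathrm{Hom}(\wedge^mV,\mathfrak g)$. $C^*(V,V)=\bigoplus_{k\ge0}\mathrm{Hom}(\wedge^kV\otimes V,V)$; for $\alpha\in\mathrm{Hom}(\wedge^nV\otimes V,V)$, $\beta\in\mathrm{Hom}(\wedge^mV\otimes V,V)$, define $(\alpha\circ\beta)(u_1,\dots,u_{m+n+1})=\sum_{\sigma\in\mathbb S_{(m,1,n-1)}}(-1)^{\sigma}\alpha(\beta(u_{\sigma(1)},\dots,u_{\sigma(m+1)}),u_{\sigma(m+2)},\dots,u_{\sigma(m+n)},u_{m+n+1})+(-1)^{mn}\sum_{\sigma\in\mathbb S_{(n,m)}}(-1)^{\sigma}\alpha(u_{\sigma(1)},\dots,u_{\sigma(n)},\beta(u_{\sigma(n+1)},\dots,u_{\sigma(m+n)},u_{m+n+1}))$ and $[\alpha,\beta]^C=\alpha\circ\beta-(-1)^{mn}\beta\circ\alpha$; this is a graded Lie algebra with $\mathrm{Hom}(\wedge^kV\otimes V,V)$ in degree $k$. *)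

theory Defs
  imports Main "HOL-Combinatorics.Permutations" "HOL-Computational_Algebra.Polynomial"
begin

definition alg_closed :: "'k::field itself \<Rightarrow> bool" where
  "alg_closed _ \<longleftrightarrow> (\<forall>p :: 'k poly. 0 < degree p \<longrightarrow> (\<exists>x. poly p x = 0))"

definition fin_dim :: "('k::field \<Rightarrow> 'v::ab_group_add \<Rightarrow> 'v) \<Rightarrow> bool" where
  "fin_dim s \<longleftrightarrow> (\<exists>B. finite_dimensional_vector_space s B)"

definition lie_algebra :: "('k::field \<Rightarrow> 'g::ab_group_add \<Rightarrow> 'g) \<Rightarrow> ('g \<Rightarrow> 'g \<Rightarrow> 'g) \<Rightarrow> bool" where
  "lie_algebra sg lb \<longleftrightarrow> vector_space sg
     \<and> (\<forall>y. Vector_Spaces.linear sg sg (\<lambda>x. lb x y))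
     \<and> (\<forall>x. Vector_Spaces.linear sg sg (\<lambda>y. lb x y))
     \<and> (\<forall>x. lb x x = 0)
     \<and> (\<forall>x y z. lb x (lb y z) + lb y (lb z x) + lb z (lb x y) = 0)"

definition lie_rep :: "('k::field \<Rightarrow> 'g::ab_group_add \<Rightarrow> 'g) \<Rightarrow> ('g \<Rightarrow> 'g \<Rightarrow> 'g)
    \<Rightarrow> ('k \<Rightarrow> 'v::ab_group_add \<Rightarrow> 'v) \<Rightarrow> ('g \<Rightarrow> 'v \<Rightarrow> 'v) \<Rightarrow> bool" where
  "lie_rep sg lb sv rho \<longleftrightarrow> vector_space sv
     \<and> (\<forall>x. Vector_Spaces.linear sv sv (rho x))
     \<and> (\<forall>x y v. rho (x + y) v = rho x v + rho y v)
     \<and> (\<forall>c x v. rho (sg c x) v = sv c (rho x v))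
     \<and> (\<forall>x y v. rho (lb x y) v = rho x (rho y v) - rho y (rho x v))"

(* An element of Hom(\<wedge>^k V, W): a map on argument lists, multilinear and alternating
   on lists of length k (its values on other lists are irrelevant). *)
definition alt_multilinear :: "('k::field \<Rightarrow> 'v::ab_group_add \<Rightarrow> 'v) \<Rightarrow> ('k \<Rightarrow> 'w::ab_group_add \<Rightarrow> 'w)
    \<Rightarrow> nat \<Rightarrow> ('v list \<Rightarrow> 'w) \<Rightarrow> bool" where
  "alt_multilinear sv sw k f \<longleftrightarrow>
     (\<forall>us i. length us = k \<longrightarrow> i < k \<longrightarrow> Vector_Spaces.linear sv sw (\<lambda>x. f (us[i := x])))
     \<and> (\<forall>us i j. length us = k \<longrightarrow> i < j \<longrightarrow> j < k \<longrightarrow> us ! i = us ! j \<longrightarrow> f us = 0)"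

(* Unshuffles S_(k_1,...,k_r): permutations of {0..<k_1+...+k_r} (0-based indices)
   increasing on consecutive blocks of sizes k_1,...,k_r *)
definition unshuffles :: "nat list \<Rightarrow> (nat \<Rightarrow> nat) set" where
  "unshuffles ks = {\<sigma>. \<sigma> permutes {0..<sum_list ks} \<and>
     (\<forall>j < length ks. \<forall>a b. sum_list (take j ks) \<le> a \<longrightarrow> a < b \<longrightarrow>
         b < sum_list (take j ks) + ks ! j \<longrightarrow> \<sigma> a < \<sigma> b)}"

(* the arguments u_{\<sigma>(a+1)},...,u_{\<sigma>(b)} in 0-based form *)
definition args :: "'v list \<Rightarrow> (nat \<Rightarrow> nat) \<Rightarrow> nat \<Rightarrow> nat \<Rightarrow> 'v list" where
  "args us \<sigma> a b = map (\<lambda>i. us ! \<sigma> i) [a..<b]"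

definition lbr :: "('k::field \<Rightarrow> 'g::ab_group_add \<Rightarrow> 'g) \<Rightarrow> ('g \<Rightarrow> 'g \<Rightarrow> 'g) \<Rightarrow> ('g \<Rightarrow> 'v \<Rightarrow> 'v)
    \<Rightarrow> nat \<Rightarrow> nat \<Rightarrow> ('v list \<Rightarrow> 'g) \<Rightarrow> ('v list \<Rightarrow> 'g) \<Rightarrow> 'v list \<Rightarrow> 'g" where
  "lbr sg lb rho n m P Q us =
     (if n = 0 then 0 else
       (\<Sum>\<sigma>\<in>unshuffles [m, 1, n - 1]. sg (of_int (sign \<sigma>))
          (P (rho (Q (args us \<sigma> 0 m)) (us ! \<sigma> m) # args us \<sigma> (m + 1) (m + n)))))
   - sg ((-1) ^ (m * n))
     (if m = 0 then 0 else
       (\<Sum>\<sigma>\<in>unshuffles [n, 1, m - 1]. sg (of_int (sign \<sigma>))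
          (Q (rho (P (args us \<sigma> 0 n)) (us ! \<sigma> n) # args us \<sigma> (n + 1) (m + n)))))
   + sg ((-1) ^ (m * n))
       (\<Sum>\<sigma>\<in>unshuffles [n, m]. sg (of_int (sign \<sigma>))
          (lb (P (args us \<sigma> 0 n)) (Q (args us \<sigma> n (n + m)))))"

(* alpha \<circ> beta for alpha \<in> Hom(\<wedge>^n V \<otimes> V, V), beta \<in> Hom(\<wedge>^m V \<otimes> V, V);
   us = [u_1,...,u_{m+n+1}] *)
definition compC :: "('k::field \<Rightarrow> 'v::ab_group_add \<Rightarrow> 'v) \<Rightarrow> nat \<Rightarrow> nat
    \<Rightarrow> ('v list \<Rightarrow> 'v) \<Rightarrow> ('v list \<Rightarrow> 'v) \<Rightarrow> 'v list \<Rightarrow> 'v" where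
  "compC sv n m \<alpha> \<beta> us =
     (if n = 0 then 0 else
       (\<Sum>\<sigma>\<in>unshuffles [m, 1, n - 1]. sv (of_int (sign \<sigma>))
          (\<alpha> (\<beta> (args us \<sigma> 0 (m + 1)) # args us \<sigma> (m + 1) (m + n) @ [us ! (m + n)]))))
   + sv ((-1) ^ (m * n))
       (\<Sum>\<sigma>\<in>unshuffles [n, m]. sv (of_int (sign \<sigma>))
          (\<alpha> (args us \<sigma> 0 n @ [\<beta> (args us \<sigma> n (n + m) @ [us ! (m + n)])])))"

definition brC :: "('k::field \<Rightarrow> 'v::ab_group_add \<Rightarrow> 'v) \<Rightarrow> nat \<Rightarrow> nat
    \<Rightarrow> ('v list \<Rightarrow> 'v) \<Rightarrow> ('v list \<Rightarrow> 'v) \<Rightarrow> 'v list \<Rightarrow> 'v" where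
  "brC sv n m \<alpha> \<beta> us = compC sv n m \<alpha> \<beta> us - sv ((-1) ^ (m * n)) (compC sv m n \<beta> \<alpha> us)"

definition Phi :: "('g \<Rightarrow> 'v \<Rightarrow> 'v) \<Rightarrow> nat \<Rightarrow> ('v list \<Rightarrow> 'g) \<Rightarrow> 'v list \<Rightarrow> 'v" where
  "Phi rho k f us = rho (f (take k us)) (us ! k)"

end

theory Submission
  imports Defs
begin

(* Applying \<rho> to the bracket term by term, the two insertion sums of [[P,Q]] become the
   first sums of \<Phi>(P) \<circ> \<Phi>(Q) and \<Phi>(Q) \<circ> \<Phi>(P), while the commutator sum splits via
   \<rho>[x,y] = \<rho>(x)\<rho>(y) - \<rho>(y)\<rho>(x) into two sums of composed actions.  These are the second sums
   of the two compositions, once the unshuffles S_(m,n) and S_(n,m) are matched by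
   exchanging the two blocks, a permutation of sign (-1)^(mn).  No multilinearity of P, Q
   is needed: the identity holds for arbitrary maps. *)

definition shift_cycle :: "nat \<Rightarrow> nat \<Rightarrow> nat" where
  "shift_cycle N i = (if i < N then (if Suc i = N then 0 else Suc i) else i)"

lemma shift_cycle_0: "shift_cycle 0 = id"
  by (rule ext) (simp add: shift_cycle_def)

lemma shift_cycle_Suc: "shift_cycle (Suc N) = transpose 0 N \<circ> shift_cycle N"
  by (rule ext) (auto simp: shift_cycle_def transpose_def)

lemma permutation_shift_cycle: "permutation (shift_cycle N)"
proof (induction N)
  case (Suc N)
  show ?case
    unfolding shift_cycle_Suc by (rule permutation_compose[OF permutation_swap_id Suc.IH])
qed (simp add: shift_cycle_0)

lemma sign_shift_cycle: "sign (shift_cycle N) = (-1) ^ (N - 1)"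
proof (induction N)
  case (Suc N)
  have "sign (shift_cycle (Suc N)) = sign (transpose 0 N) * sign (shift_cycle N)"
    by (simp only: shift_cycle_Suc sign_compose permutation_swap_id permutation_shift_cycle)
  with Suc.IH show ?case
    by (cases N) (simp_all add: sign_swap_id)
qed (simp add: shift_cycle_0)

lemma funpow_shift_cycle: "(shift_cycle N ^^ k) i = (if i < N then (i + k) mod N else i)"
  by (induction k) (auto simp: shift_cycle_def mod_Suc)

lemma permutation_funpow: "permutation p \<Longrightarrow> permutation (p ^^ k)"
  by (induction k) (simp_all add: permutation_compose)

lemma sign_funpow: "permutation p \<Longrightarrow> sign (p ^^ k) = sign p ^ k"
  by (induction k) (simp_all add: sign_compose permutation_funpow)

definition block_swap :: "nat \<Rightarrow> nat \<Rightarrow> nat \<Rightarrow> nat" where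
  "block_swap a b i = (if i < a then i + b else if i < a + b then i - a else i)"

lemma block_swap_eq_funpow: "block_swap a b = shift_cycle (a + b) ^^ b"
proof (rule ext)
  fix i
  have "(i + b) mod (a + b) = i - a" if "a \<le> i" "i < a + b"
    using that by (simp add: mod_if)
  then show "block_swap a b i = (shift_cycle (a + b) ^^ b) i"
    by (simp add: funpow_shift_cycle block_swap_def)
qed

lemma permutation_block_swap: "permutation (block_swap a b)"
  by (simp add: block_swap_eq_funpow permutation_funpow permutation_shift_cycle)

lemma sign_block_swap: "sign (block_swap a b) = (-1) ^ (a * b)"
proof -
  have "(-1::int) ^ ((a + b - 1) * b) = (-1) ^ (a * b)"
  proof (cases b)
    case (Suc c)
    have "(a + b - 1) * b = a * b + c * Suc c"
      using Suc by (simp add: algebra_simps)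
    moreover have "(-1::int) ^ (c * Suc c) = 1"
      by (rule neg_one_even_power) simp
    ultimately show ?thesis
      by (simp only: power_add mult_1_right)
  qed simp
  then show ?thesis
    by (simp add: block_swap_eq_funpow sign_funpow permutation_shift_cycle sign_shift_cycle
        flip: power_mult)
qed

lemma block_swap_block_swap: "block_swap a b (block_swap b a i) = i"
  by (auto simp: block_swap_def)

lemma block_swap_inverse: "block_swap a b \<circ> block_swap b a = id"
  by (rule ext) (simp add: block_swap_block_swap)

lemma block_swap_permutes: "block_swap a b permutes {0..<a + b}"
proof (rule bij_imp_permutes)
  show "bij_betw (block_swap a b) {0..<a + b} {0..<a + b}"
    by (rule bij_betw_byWitness[where f'="block_swap b a"])
      (simp_all add: block_swap_block_swap, auto simp: block_swap_def)
qed (simp add: block_swap_def)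

lemma permutation_unshuffles: "\<sigma> \<in> unshuffles ks \<Longrightarrow> permutation \<sigma>"
  by (auto simp: unshuffles_def permutation_permutes)

lemma unshuffles_permutes: "\<sigma> \<in> unshuffles ks \<Longrightarrow> sum_list ks = N \<Longrightarrow> \<sigma> permutes {0..<N}"
  by (simp add: unshuffles_def)

lemma unshuffles_two_blocks:
  "\<sigma> \<in> unshuffles [a, b] \<longleftrightarrow> \<sigma> permutes {0..<a + b} \<and>
     (\<forall>x y. x < y \<longrightarrow> y < a \<longrightarrow> \<sigma> x < \<sigma> y) \<and>
     (\<forall>x y. a \<le> x \<longrightarrow> x < y \<longrightarrow> y < a + b \<longrightarrow> \<sigma> x < \<sigma> y)"
proof -
  have "(\<forall>j<length [a, b]. R j) \<longleftrightarrow> R 0 \<and> R 1" for R :: "nat \<Rightarrow> bool"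
    by (auto simp: less_Suc_eq)
  then show ?thesis
    unfolding unshuffles_def by simp
qed

lemma comp_block_swap_unshuffles:
  assumes "\<sigma> \<in> unshuffles [b, a]"
  shows "\<sigma> \<circ> block_swap a b \<in> unshuffles [a, b]"
  using assms permutes_compose[OF block_swap_permutes, of \<sigma> a b]
  by (auto simp: unshuffles_two_blocks block_swap_def add.commute)

lemma bij_betw_comp_block_swap_unshuffles:
  "bij_betw (\<lambda>\<sigma>. \<sigma> \<circ> block_swap a b) (unshuffles [b, a]) (unshuffles [a, b])"
proof (rule bij_betw_byWitness[where f'="\<lambda>\<tau>. \<tau> \<circ> block_swap b a"])
  show "\<forall>\<sigma>\<in>unshuffles [b, a]. \<sigma> \<circ> block_swap a b \<circ> block_swap b a = \<sigma>"
    by (simp add: comp_assoc block_swap_inverse)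
  show "\<forall>\<tau>\<in>unshuffles [a, b]. \<tau> \<circ> block_swap b a \<circ> block_swap a b = \<tau>"
    by (simp add: comp_assoc block_swap_inverse)
qed (use comp_block_swap_unshuffles in blast)+

lemma args_comp_block_swap_first: "args us (\<sigma> \<circ> block_swap a b) 0 a = args us \<sigma> b (b + a)"
  by (rule nth_equalityI) (auto simp: args_def block_swap_def add.commute)

lemma args_comp_block_swap_second: "args us (\<sigma> \<circ> block_swap a b) a (a + b) = args us \<sigma> 0 b"
  by (rule nth_equalityI) (auto simp: args_def block_swap_def)

lemma sum_unshuffles_swap_blocks:
  assumes "vector_space (sv :: 'k::field \<Rightarrow> 'v::ab_group_add \<Rightarrow> 'v)"
  shows "(\<Sum>\<tau>\<in>unshuffles [m, n]. sv (of_int (sign \<tau>)) (F (args us \<tau> 0 m) (args us \<tau> m (m + n))))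
    = sv ((-1) ^ (m * n))
        (\<Sum>\<sigma>\<in>unshuffles [n, m]. sv (of_int (sign \<sigma>)) (F (args us \<sigma> n (n + m)) (args us \<sigma> 0 n)))"
  (is "?lhs = sv ?s (\<Sum>\<sigma>\<in>_. ?f \<sigma>)")
proof -
  interpret vector_space sv by (rule assms)
  have "?lhs = (\<Sum>\<sigma>\<in>unshuffles [n, m]. sv (of_int (sign (\<sigma> \<circ> block_swap m n)))
      (F (args us (\<sigma> \<circ> block_swap m n) 0 m) (args us (\<sigma> \<circ> block_swap m n) m (m + n))))"
    by (rule sum.reindex_bij_betw[symmetric, OF bij_betw_comp_block_swap_unshuffles])
  also have "\<dots> = (\<Sum>\<sigma>\<in>unshuffles [n, m]. sv ?s (?f \<sigma>))"
  proof (rule sum.cong[OF refl])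
    fix \<sigma> assume "\<sigma> \<in> unshuffles [n, m]"
    then have "sign (\<sigma> \<circ> block_swap m n) = (-1) ^ (m * n) * sign \<sigma>"
      by (simp add: sign_compose permutation_unshuffles permutation_block_swap sign_block_swap)
    then show "sv (of_int (sign (\<sigma> \<circ> block_swap m n)))
        (F (args us (\<sigma> \<circ> block_swap m n) 0 m) (args us (\<sigma> \<circ> block_swap m n) m (m + n)))
      = sv ?s (?f \<sigma>)"
      by (simp add: args_comp_block_swap_first args_comp_block_swap_second)
  qed
  also have "\<dots> = sv ?s (\<Sum>\<sigma>\<in>unshuffles [n, m]. ?f \<sigma>)"
    by (simp add: scale_sum_right)
  finally show ?thesis .
qed

lemma length_args [simp]: "length (args us \<sigma> a b) = b - a"
  by (simp add: args_def)

lemma nth_take_unshuffles: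
  "\<sigma> \<in> unshuffles ks \<Longrightarrow> i < sum_list ks \<Longrightarrow> sum_list ks \<le> N \<Longrightarrow> take N us ! \<sigma> i = us ! \<sigma> i"
  using permutes_in_image[OF unshuffles_permutes[OF _ refl], of \<sigma> ks i] by simp

lemma args_take_unshuffles:
  "\<sigma> \<in> unshuffles ks \<Longrightarrow> b \<le> sum_list ks \<Longrightarrow> sum_list ks \<le> N
     \<Longrightarrow> args (take N us) \<sigma> a b = args us \<sigma> a b"
  by (simp add: args_def nth_take_unshuffles)

lemma Phi_args: "Phi rho m f (args us \<sigma> 0 (Suc m)) = rho (f (args us \<sigma> 0 m)) (us ! \<sigma> m)"
  by (simp add: Phi_def args_def nth_append)

lemma Phi_snoc: "length xs = k \<Longrightarrow> Phi rho k f (xs @ [y]) = rho (f xs) y"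
  by (simp add: Phi_def nth_append)

lemma Phi_Cons_snoc: "Suc (length xs) = k \<Longrightarrow> Phi rho k f (x # xs @ [y]) = rho (f (x # xs)) y"
  using Phi_snoc[of "x # xs" k rho f y] by simp

definition nested_sum :: "('k::field \<Rightarrow> 'v::ab_group_add \<Rightarrow> 'v) \<Rightarrow> ('g \<Rightarrow> 'v \<Rightarrow> 'v) \<Rightarrow> nat \<Rightarrow> nat
    \<Rightarrow> ('v list \<Rightarrow> 'g) \<Rightarrow> ('v list \<Rightarrow> 'g) \<Rightarrow> 'v list \<Rightarrow> 'v" where
  "nested_sum sv rho n m P Q us =
     (if n = 0 then 0 else
       (\<Sum>\<sigma>\<in>unshuffles [m, 1, n - 1]. sv (of_int (sign \<sigma>))
          (rho (P (rho (Q (args us \<sigma> 0 m)) (us ! \<sigma> m) # args us \<sigma> (m + 1) (m + n))) (us ! (m + n)))))"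

definition composed_sum :: "('k::field \<Rightarrow> 'v::ab_group_add \<Rightarrow> 'v) \<Rightarrow> ('g \<Rightarrow> 'v \<Rightarrow> 'v) \<Rightarrow> nat \<Rightarrow> nat
    \<Rightarrow> ('v list \<Rightarrow> 'g) \<Rightarrow> ('v list \<Rightarrow> 'g) \<Rightarrow> 'v list \<Rightarrow> 'v" where
  "composed_sum sv rho n m P Q us =
     (\<Sum>\<sigma>\<in>unshuffles [n, m]. sv (of_int (sign \<sigma>))
        (rho (P (args us \<sigma> 0 n)) (rho (Q (args us \<sigma> n (n + m))) (us ! (m + n)))))"

lemma compC_Phi:
  "compC sv n m (Phi rho n P) (Phi rho m Q) us
     = nested_sum sv rho n m P Q us + sv ((-1) ^ (m * n)) (composed_sum sv rho n m P Q us)"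
  unfolding compC_def nested_sum_def composed_sum_def
  by (auto intro!: sum.cong simp: Phi_args Phi_Cons_snoc Phi_snoc)

lemma lbr_take:
  assumes "m + n \<le> N"
  shows "lbr sg lb rho n m P Q (take N us) = lbr sg lb rho n m P Q us"
  using assms
  by (simp add: lbr_def args_take_unshuffles nth_take_unshuffles cong: sum.cong_simp if_cong)

lemma lie_rep_additive: "lie_rep sg lb sv rho \<Longrightarrow> additive (\<lambda>x. rho x v)"
  by unfold_locales (simp add: lie_rep_def)

lemma lie_rep_sum_action:
  assumes "lie_rep sg lb sv rho"
  shows "rho (\<Sum>i\<in>I. sg (c i) (x i)) v = (\<Sum>i\<in>I. sv (c i) (rho (x i) v))"
  using assms by (simp add: additive.sum[OF lie_rep_additive[OF assms]] lie_rep_def)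

lemma rho_lbr:
  fixes sv :: "'k::field \<Rightarrow> 'v::ab_group_add \<Rightarrow> 'v"
  assumes rep: "lie_rep sg lb sv rho"
  shows "rho (lbr sg lb rho n m P Q us) (us ! (m + n))
     = nested_sum sv rho n m P Q us - sv ((-1) ^ (m * n)) (nested_sum sv rho m n Q P us)
       + sv ((-1) ^ (m * n)) (composed_sum sv rho n m P Q us) - composed_sum sv rho m n Q P us"
proof -
  interpret vector_space sv
    using rep by (simp add: lie_rep_def)
  note action = additive.zero[OF lie_rep_additive[OF rep]] additive.add[OF lie_rep_additive[OF rep]]
    additive.diff[OF lie_rep_additive[OF rep]]
  have scale: "rho (sg c x) v = sv c (rho x v)" for c x v
    using rep by (simp add: lie_rep_def)
  have bracket: "rho (lb x y) v = rho x (rho y v) - rho y (rho x v)" for x y v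
    using rep by (simp add: lie_rep_def)
  let ?s = "(-1) ^ (m * n) :: 'k"
  let ?D = "\<Sum>\<sigma>\<in>unshuffles [n, m]. sv (of_int (sign \<sigma>))
     (rho (Q (args us \<sigma> n (n + m))) (rho (P (args us \<sigma> 0 n)) (us ! (m + n))))"
  have swapped: "composed_sum sv rho m n Q P us = sv ?s ?D"
    using sum_unshuffles_swap_blocks[OF vector_space_axioms,
        where F="\<lambda>x y. rho (Q x) (rho (P y) (us ! (m + n)))"]
    by (simp add: composed_sum_def add.commute)
  have square: "?s * ?s = 1"
    by (simp flip: power_mult_distrib)
  then have D: "?D = sv ?s (composed_sum sv rho m n Q P us)"
    by (simp add: swapped)
  have inserted_P: "rho (if n = 0 then 0 else \<Sum>\<sigma>\<in>unshuffles [m, 1, n - 1]. sg (of_int (sign \<sigma>))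
          (P (rho (Q (args us \<sigma> 0 m)) (us ! \<sigma> m) # args us \<sigma> (m + 1) (m + n)))) (us ! (m + n))
      = nested_sum sv rho n m P Q us"
    by (simp add: nested_sum_def lie_rep_sum_action[OF rep] scale action(1))
  have inserted_Q: "rho (if m = 0 then 0 else \<Sum>\<sigma>\<in>unshuffles [n, 1, m - 1]. sg (of_int (sign \<sigma>))
          (Q (rho (P (args us \<sigma> 0 n)) (us ! \<sigma> n) # args us \<sigma> (n + 1) (m + n)))) (us ! (m + n))
      = nested_sum sv rho m n Q P us"
    by (simp add: nested_sum_def lie_rep_sum_action[OF rep] scale action(1) add.commute)
  have commutator: "rho (\<Sum>\<sigma>\<in>unshuffles [n, m]. sg (of_int (sign \<sigma>))
          (lb (P (args us \<sigma> 0 n)) (Q (args us \<sigma> n (n + m))))) (us ! (m + n))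
      = composed_sum sv rho n m P Q us - sv ?s (composed_sum sv rho m n Q P us)"
    unfolding D[symmetric]
    by (simp add: lie_rep_sum_action[OF rep] bracket composed_sum_def scale_right_diff_distrib
        sum_subtractf)
  show ?thesis
    unfolding lbr_def action(2,3) scale inserted_P inserted_Q commutator
    by (simp add: scale_right_diff_distrib square)
qed

theorem proposition2p8:
  fixes sv :: "'k::field_char_0 \<Rightarrow> 'v::ab_group_add \<Rightarrow> 'v"
    and sg :: "'k \<Rightarrow> 'g::ab_group_add \<Rightarrow> 'g"
    and lb :: "'g \<Rightarrow> 'g \<Rightarrow> 'g"
    and rho :: "'g \<Rightarrow> 'v \<Rightarrow> 'v"
    and P Q :: "'v list \<Rightarrow> 'g"
    and n m :: nat
  assumes "alg_closed TYPE('k)"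
    and "vector_space sv" and "fin_dim sv"
    and "lie_algebra sg lb" and "fin_dim sg"
    and "lie_rep sg lb sv rho"
    and "alt_multilinear sv sg n P"
    and "alt_multilinear sv sg m Q"
    and "length us = m + n + 1"
  shows "Phi rho (m + n) (lbr sg lb rho n m P Q) us
       = brC sv n m (Phi rho n P) (Phi rho m Q) us"
proof -
  interpret vector_space sv by (rule assms(2))
  let ?s = "(-1) ^ (m * n) :: 'k"
  have "Phi rho (m + n) (lbr sg lb rho n m P Q) us = rho (lbr sg lb rho n m P Q us) (us ! (m + n))"
    by (simp add: Phi_def lbr_take)
  also have "\<dots> = nested_sum sv rho n m P Q us - sv ?s (nested_sum sv rho m n Q P us)
      + sv ?s (composed_sum sv rho n m P Q us) - composed_sum sv rho m n Q P us"
    by (rule rho_lbr[OF assms(6)])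
  also have "\<dots> = brC sv n m (Phi rho n P) (Phi rho m Q) us"
    by (simp add: brC_def compC_Phi mult.commute scale_right_diff_distrib scale_right_distrib
        flip: power_mult_distrib)
  finally show ?thesis .
qed

end
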